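(* Let $A\in\mathcal A_n$ with Kupisch series $[c_0,\dots,c_{n-1}]$. Then the directed graph $\tau(A)$ is a tree rooted at the vertex $n$.
   Context: $K$ is an algebraically closed field. $\mathcal A_n$ is the set of ordered products $A=A_1\times\cdots\times A_k$ of connected linear Nakayama algebras with $n$ simple modules in total (the order of factors matters). The Kupisch series of $A$ is the concatenation of the Kupisch series of $A_1,\dots,A_k$, where a connected linear Nakayama algebra with $m$ simple modules has Kupisch series $[c_0,\dots,c_{m-1}]$, $c_i=\dim e_iA$, characterized by $c_{i+1}+1\ge c_i\ge2$ for $0\le i<m-1$ and $c_{m-1}=1$. $\tau(A)$ is the directed graph with vertex set $\{0,\dots,n\}$ and an edge $i+c_i\to i$ for each $0\le i<n$. *)

theory Defs
  imports Main
begin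

definition kupisch_conn :: "nat list \<Rightarrow> bool" where
  "kupisch_conn cs \<longleftrightarrow> cs \<noteq> [] \<and> last cs = 1 \<and>
     (\<forall>i. Suc i < length cs \<longrightarrow> cs ! (Suc i) + 1 \<ge> cs ! i \<and> cs ! i \<ge> 2)"

text \<open>An element of A_n, an ordered product A_1 x ... x A_k of connected linear Nakayama
  algebras with n simples in total, represented (up to isomorphism) by the ordered list of
  the Kupisch series of its factors.\<close>
definition algs_A :: "nat \<Rightarrow> nat list list set" where
  "algs_A n = {As. (\<forall>a\<in>set As. kupisch_conn a) \<and> sum_list (map length As) = n}"

definition kupisch_series :: "nat list list \<Rightarrow> nat list" where
  "kupisch_series As = concat As"

definition tau_vertices :: "nat \<Rightarrow> nat set" where
  "tau_vertices n = {0..n}"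

definition tau_edges :: "nat \<Rightarrow> nat list \<Rightarrow> (nat \<times> nat) set" where
  "tau_edges n c = {(i + c ! i, i) | i. i < n}"

definition dwalk :: "('a \<times> 'a) set \<Rightarrow> 'a list \<Rightarrow> bool" where
  "dwalk E p \<longleftrightarrow> p \<noteq> [] \<and> (\<forall>i. Suc i < length p \<longrightarrow> (p ! i, p ! Suc i) \<in> E)"

definition rooted_tree :: "'a set \<Rightarrow> ('a \<times> 'a) set \<Rightarrow> 'a \<Rightarrow> bool" where
  "rooted_tree V E r \<longleftrightarrow> E \<subseteq> V \<times> V \<and> r \<in> V \<and>
     (\<forall>v\<in>V. \<exists>!p. dwalk E p \<and> hd p = r \<and> last p = v)"

end

theory Submission
  imports Defs
begin

text \<open>Every vertex i < n of \<open>\<tau>(A)\<close> has exactly one incoming edge, from its parent i + c_i.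
  Within each factor the Kupisch series drops by at most one per step and ends with 1, so the
  parent never lies beyond the end of the factor containing i; hence i < i + c_i \<le> n.
  Climbing from any vertex to its parent therefore reaches n, reversing this climb gives a walk
  from n, and it is the only one because no vertex has two incoming edges and n has none.\<close>

definition forward_jumps :: "nat list \<Rightarrow> bool" where
  "forward_jumps c \<longleftrightarrow> (\<forall>i<length c. 0 < c ! i \<and> i + c ! i \<le> length c)"

lemma kupisch_conn_forward_jumps:
  assumes "kupisch_conn a"
  shows "forward_jumps a"
  unfolding forward_jumps_def
proof (intro allI impI)
  fix j assume "j < length a"
  then have "j \<le> length a - 1" by simp
  then show "0 < a ! j \<and> j + a ! j \<le> length a"
  proof (induction j rule: inc_induct)
    case base
    from assms have "a \<noteq> []" "a ! (length a - 1) = 1"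
      by (auto simp: kupisch_conn_def last_conv_nth)
    then show ?case by simp
  next
    case (step i)
    then have "Suc i < length a" by simp
    with assms have "a ! i \<le> a ! Suc i + 1" "2 \<le> a ! i"
      unfolding kupisch_conn_def by auto
    with step.IH show ?case by simp
  qed
qed

lemma forward_jumps_append:
  assumes "forward_jumps a" and "forward_jumps b"
  shows "forward_jumps (a @ b)"
  unfolding forward_jumps_def
proof (intro allI impI)
  fix i assume i: "i < length (a @ b)"
  show "0 < (a @ b) ! i \<and> i + (a @ b) ! i \<le> length (a @ b)"
  proof (cases "i < length a")
    case True
    with assms(1) show ?thesis by (auto simp: forward_jumps_def nth_append)
  next
    case False
    then obtain j where "i = length a + j"
      using le_Suc_ex by fastforce
    with i assms(2) show ?thesis
      by (simp add: forward_jumps_def)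
  qed
qed

lemma forward_jumps_concat:
  assumes "\<forall>a\<in>set As. forward_jumps a"
  shows "forward_jumps (concat As)"
  using assms by (induction As) (auto simp: forward_jumps_append forward_jumps_def[of "[]"])

lemma dwalk_snoc:
  "dwalk E (p @ [x]) \<longleftrightarrow> p = [] \<or> dwalk E p \<and> (last p, x) \<in> E"
proof (cases p rule: rev_cases)
  case (snoc p' y)
  then have "(\<forall>i. Suc i < length (p @ [x]) \<longrightarrow> ((p @ [x]) ! i, (p @ [x]) ! Suc i) \<in> E)
      \<longleftrightarrow> (\<forall>i. Suc i < length p \<longrightarrow> (p ! i, p ! Suc i) \<in> E) \<and> (last p, x) \<in> E"
    by (auto simp: nth_append less_Suc_eq)
  with snoc show ?thesis
    by (simp add: dwalk_def)
qed (simp add: dwalk_def)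

lemma dwalk_from_root_unique:
  assumes parent_unique: "\<And>u u' v. (u, v) \<in> E \<Longrightarrow> (u', v) \<in> E \<Longrightarrow> u = u'"
    and root_no_parent: "\<And>u. (u, r) \<notin> E"
  shows "dwalk E p \<Longrightarrow> hd p = r \<Longrightarrow> dwalk E q \<Longrightarrow> hd q = r \<Longrightarrow> last p = last q \<Longrightarrow> p = q"
proof (induction p arbitrary: q rule: rev_induct)
  case Nil
  then show ?case by (simp add: dwalk_def)
next
  case (snoc x p)
  from \<open>dwalk E q\<close> obtain q' where q: "q = q' @ [x]"
    using snoc.prems(5) by (cases q rule: rev_cases) (auto simp: dwalk_def)
  have last_not_root: "x \<noteq> r" if "dwalk E (s @ [x])" "s \<noteq> []" for s
    using that root_no_parent by (auto simp: dwalk_snoc)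
  consider "p = []" "q' = []" | "p \<noteq> []" "q' \<noteq> []"
    using last_not_root snoc.prems q by fastforce
  then show ?case
  proof cases
    case 2
    with snoc.prems q have "dwalk E p" "dwalk E q'" "last p = last q'"
      using parent_unique by (auto simp: dwalk_snoc)
    with 2 snoc.prems q have "p = q'"
      by (intro snoc.IH) auto
    with q show ?thesis by simp
  qed (simp add: q)
qed

lemma dwalk_parent_map_exists:
  fixes f :: "nat \<Rightarrow> nat"
  assumes parent: "\<And>i. i < n \<Longrightarrow> i < f i \<and> f i \<le> n"
  shows "v \<le> n \<Longrightarrow> \<exists>p. dwalk {(f i, i) | i. i < n} p \<and> hd p = n \<and> last p = v"
proof (induction "n - v" arbitrary: v rule: less_induct)
  case less
  show ?case
  proof (cases "v = n")
    case True
    then show ?thesis by (intro exI[of _ "[n]"]) (simp add: dwalk_def)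
  next
    case False
    with less.prems have "v < n" by simp
    with parent have "n - f v < n - v" "f v \<le> n" by force+
    with less.hyps obtain p where p: "dwalk {(f i, i) | i. i < n} p" "hd p = n" "last p = f v"
      by blast
    with \<open>v < n\<close> have "dwalk {(f i, i) | i. i < n} (p @ [v])"
      by (auto simp: dwalk_snoc)
    moreover from p have "hd (p @ [v]) = n"
      by (simp add: dwalk_def)
    ultimately show ?thesis
      by auto
  qed
qed

lemma rooted_tree_parent_map:
  fixes f :: "nat \<Rightarrow> nat"
  assumes parent: "\<And>i. i < n \<Longrightarrow> i < f i \<and> f i \<le> n"
  shows "rooted_tree {0..n} {(f i, i) | i. i < n} n"
  unfolding rooted_tree_def
proof (intro conjI ballI)
  let ?E = "{(f i, i) | i. i < n}"
  show "?E \<subseteq> {0..n} \<times> {0..n}"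
    by (auto dest!: parent)
  show "n \<in> {0..n}"
    by simp
  fix v assume "v \<in> {0..n}"
  with dwalk_parent_map_exists[OF parent] obtain p where "dwalk ?E p" "hd p = n" "last p = v"
    by auto
  moreover have "q = p" if "dwalk ?E q" "hd q = n" "last q = v" for q
    using dwalk_from_root_unique[of ?E n q p] that calculation by auto
  ultimately show "\<exists>!p. dwalk ?E p \<and> hd p = n \<and> last p = v"
    by blast
qed

theorem lemma3p1:
  fixes n :: nat and A :: "nat list list"
  assumes "A \<in> algs_A n"
  shows "rooted_tree (tau_vertices n) (tau_edges n (kupisch_series A)) n"
proof -
  let ?c = "concat A"
  from assms have "forward_jumps ?c" and "length ?c = n"
    by (simp_all add: algs_A_def forward_jumps_concat kupisch_conn_forward_jumps length_concat)
  then have "i < i + ?c ! i \<and> i + ?c ! i \<le> n" if "i < n" for i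
    using that by (simp add: forward_jumps_def)
  then have "rooted_tree {0..n} {(i + ?c ! i, i) | i. i < n} n"
    by (rule rooted_tree_parent_map)
  then show ?thesis
    by (simp add: tau_vertices_def tau_edges_def kupisch_series_def)
qed

end
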